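(* Let $b,k>0$, $0<c<1$, $R_0>0$, $\bar\varrho>0$ be constants. Let $\mathring\varrho,\mathring n,\mathring\Pi$ be functions on $\mathbb{R}^3$ with $\mathring\varrho+p(\mathring\varrho,\mathring n)+\mathring\Pi>0$, and let $\mathbf u_1$ be a smooth vector field supported in $B_{R_0}$ with $$\int_{B_{R_0}}\mathbf x\cdot\mathbf u_1|\mathbf u_1|(\mathring\varrho+\mathring p+\mathring\Pi)\,dx>R_0\frac{(c+1)^2}{2(c^2+1)}\int_{B_{R_0}}|\mathbf u_1|^2(\mathring\varrho+\mathring p+\mathring\Pi)\,dx,$$ where $\mathring p=p(\mathring\varrho,\mathring n)$. For $\sigma>0$ set $\mathring{\mathbf u}=\sigma\mathbf u_1$, $E=\int_{B_{R_0}}\big((\mathring\varrho+\mathring p+\mathring\Pi)|\mathring{\mathbf u}|^2+\mathring\varrho-\bar\varrho\big)dx$ and $Q(0)=\int_{B_{R_0}}\mathbf x\cdot\mathring{\mathbf u}\sqrt{1+|\mathring{\mathbf u}|^2}(\mathring\varrho+\mathring p+\mathring\Pi)\,dx$. Then there exists $\bar R>R_0$ such that for all sufficiently large $\sigma>0$, with $A=c\big(1+\frac{3b\bar R^3}{E+b\bar R^3}\big)$, $B=\frac{k\bar R^3}{E+b\bar R^3}$ and $z_0=\frac{A(1-B)+\sqrt{A^2+2B-B^2}}{A^2+1}$, the following hold: $A^2+2B-B^2>0$, $A+B<1$, $z_0<1$, $\int_{\frac12+\frac{z_0}2}^1\frac{dz}{1-\sqrt{1-z^2}-Az-B}<\log(\bar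 R/R_0)$, and $\frac{Q(0)}{R_0(E+bR_0^3)}>\frac{z_0}2+\frac12$.
   Context: $B_R=\{x\in\mathbb{R}^3:|x|<R\}$; $p=p(\varrho,n)$ is a given pressure function (equation of state). *)

theory Defs
  imports "HOL-Analysis.Analysis"
begin

fun Ck_field :: "nat \<Rightarrow> (real^3 \<Rightarrow> real^3) \<Rightarrow> bool" where
  "Ck_field 0 f = continuous_on UNIV f"
| "Ck_field (Suc m) f =
     (\<exists>D. (\<forall>x. (f has_derivative D x) (at x)) \<and> (\<forall>v. Ck_field m (\<lambda>x. D x v)))"

definition smooth_field :: "(real^3 \<Rightarrow> real^3) \<Rightarrow> bool" where
  "smooth_field f \<longleftrightarrow> (\<forall>m. Ck_field m f)"

end

theory Submission
  imports Defs
begin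

(* With w = rho + p + Pi, the energy is E = sigma^2 I2 + const where I2 = int |u1|^2 w, and,
   because y <= sqrt (1 + y^2) <= y + 1, the flux satisfies Q(0) >= sigma^2 I3 - sigma J where
   I3 = int x.u1 |u1| w. Since I3 <= R0 I2, the hypothesis forces I2 > 0, so E -> oo and
   Q(0) / (R0 (E + b R0^3)) is eventually above some theta > (c+1)^2 / (2 (c^2+1)).
   Meanwhile A -> c and B -> 0, hence z0 -> 2c / (c^2+1) < 1 and z0/2 + 1/2 tends to exactly
   (c+1)^2 / (2 (c^2+1)). On [(1+z0)/2, 1] the denominator 1 - sqrt (1-z^2) - A z - B is at
   least (1-z0)^2/8, so the integral is at most 4 / (1-z0), a bound that is uniform for large
   sigma; Rbar is chosen with log (Rbar/R0) above it. *)

lemma two_mult_lt_square_add_one: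
  fixes c :: real
  assumes "c \<noteq> 1"
  shows "2 * c < c^2 + 1"
proof -
  have "0 < (c - 1)^2" using assms by simp
  then show ?thesis by (simp add: power2_eq_square algebra_simps)
qed

lemma square_sum_div_lt_1:
  fixes c :: real
  assumes "c \<noteq> 1"
  shows "(c + 1)^2 / (2 * (c^2 + 1)) < 1"
proof -
  have "(c + 1)^2 < 2 * (c^2 + 1)"
    using two_mult_lt_square_add_one[OF assms] by (simp add: power2_sum)
  moreover have "0 < c^2 + 1" by (intro add_nonneg_pos) auto
  ultimately show ?thesis by simp
qed

lemma sqrt_one_plus_square_bounds:
  fixes y :: real
  assumes "0 \<le> y"
  shows "y \<le> sqrt (1 + y^2)" and "sqrt (1 + y^2) \<le> y + 1"
proof -
  show "y \<le> sqrt (1 + y^2)" by (rule real_le_rsqrt) simp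
  have "1 + y^2 \<le> (y + 1)^2" using assms by (simp add: power2_sum)
  then show "sqrt (1 + y^2) \<le> y + 1" using assms by (intro real_le_lsqrt) auto
qed

lemma mult_sqrt_one_plus_square_ge:
  fixes s t n :: real
  assumes "0 \<le> s" and "0 \<le> n"
  shows "s^2 * (t * n) - s * \<bar>t\<bar> \<le> s * t * sqrt (1 + (s * n)^2)"
proof -
  define d where "d = sqrt (1 + (s * n)^2) - s * n"
  have "0 \<le> d" "d \<le> 1"
    using sqrt_one_plus_square_bounds[of "s * n"] assms unfolding d_def by auto
  then have "- \<bar>t\<bar> \<le> t * d"
    by (cases "0 \<le> t") (auto intro: order_trans[of _ 0] mult_right_le_one_le simp: mult_le_0_iff)
  then have "s * (- \<bar>t\<bar>) \<le> s * (t * d)" using assms(1) by (rule mult_left_mono)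
  then show ?thesis unfolding d_def by (simp add: power2_eq_square algebra_simps)
qed

(* (A (1 - B) + sqrt (A^2 + 2 B - B^2)) / (A^2 + 1) is the larger root z0 of
   (1 - A z - B)^2 = 1 - z^2, i.e. the zero of the denominator 1 - sqrt (1 - z^2) - A z - B
   of the integrand. *)
lemma larger_root_nonneg:
  fixes A B :: real
  assumes "0 \<le> A" and "B < 1" and "0 \<le> A^2 + 2 * B - B^2"
  shows "0 \<le> (A * (1 - B) + sqrt (A^2 + 2 * B - B^2)) / (A^2 + 1)"
  using assms by (intro divide_nonneg_pos add_nonneg_nonneg) (auto simp: add_nonneg_pos)

lemma larger_root_factorization:
  fixes A B z z0 :: real
  assumes D: "0 \<le> A^2 + 2 * B - B^2"
    and z0: "z0 = (A * (1 - B) + sqrt (A^2 + 2 * B - B^2)) / (A^2 + 1)"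
  shows "(1 - A * z - B)^2 - (1 - z^2)
       = (A^2 + 1) * (z - z0)^2 + 2 * sqrt (A^2 + 2 * B - B^2) * (z - z0)"
proof -
  define q where "q = A^2 + 1"
  define d where "d = sqrt (A^2 + 2 * B - B^2)"
  have "q > 0" unfolding q_def by (simp add: add_nonneg_pos)
  have d2: "d^2 = A^2 + 2 * B - B^2" unfolding d_def using D by simp
  have qz0: "q * z0 = A * (1 - B) + d" unfolding z0 d_def q_def using \<open>q > 0\<close> q_def by simp
  have "q * ((1 - A * z - B)^2 - (1 - z^2)) = (q * z - A * (1 - B))^2 - d^2"
    unfolding d2 q_def by (simp add: power2_eq_square algebra_simps)
  also have "\<dots> = (q * z - q * z0)^2 + 2 * d * (q * z - q * z0)"
    unfolding qz0 by (simp add: power2_eq_square algebra_simps)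
  also have "\<dots> = q * (q * (z - z0)^2 + 2 * d * (z - z0))"
    by (simp add: power2_eq_square algebra_simps)
  finally show ?thesis using \<open>q > 0\<close> unfolding q_def d_def by simp
qed

lemma integrand_denominator_ge:
  fixes A B z0 z :: real
  assumes A: "0 \<le> A" and B: "0 \<le> B" and AB: "A + B < 1" and D: "0 \<le> A^2 + 2 * B - B^2"
    and z0: "z0 = (A * (1 - B) + sqrt (A^2 + 2 * B - B^2)) / (A^2 + 1)" and "z0 < 1"
    and z: "z \<in> {1/2 + z0/2 .. 1}"
  shows "(1 - z0)^2 / 8 \<le> 1 - sqrt (1 - z^2) - A * z - B"
proof -
  define a where "a = 1 - A * z - B"
  define s where "s = sqrt (1 - z^2)"
  have "0 \<le> z0" unfolding z0 using A AB B D by (intro larger_root_nonneg) auto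
  then have "0 \<le> z" "z \<le> 1" "(1 - z0) / 2 \<le> z - z0" using z by auto
  have "0 \<le> A * z" "A * z \<le> A" using A \<open>0 \<le> z\<close> \<open>z \<le> 1\<close> by (auto simp: mult_left_le)
  then have "0 < a" "a \<le> 1" using B AB unfolding a_def by auto
  have "z^2 \<le> 1" using \<open>0 \<le> z\<close> \<open>z \<le> 1\<close> by (simp add: abs_square_le_1)
  then have "0 \<le> s" "s \<le> 1" "s^2 = 1 - z^2" unfolding s_def by auto
  have "((1 - z0) / 2)^2 \<le> (z - z0)^2"
    using \<open>(1 - z0) / 2 \<le> z - z0\<close> \<open>z0 < 1\<close> by (intro power_mono) auto
  also have "\<dots> \<le> (A^2 + 1) * (z - z0)^2 + 2 * sqrt (A^2 + 2 * B - B^2) * (z - z0)"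
    using \<open>(1 - z0) / 2 \<le> z - z0\<close> \<open>z0 < 1\<close> D
    by (intro add_increasing2 mult_nonneg_nonneg) (auto simp: mult_le_cancel_right1)
  also have "\<dots> = a^2 - s^2"
    unfolding a_def \<open>s^2 = 1 - z^2\<close> using larger_root_factorization[OF D z0] by simp
  also have "\<dots> = (a - s) * (a + s)" by (simp add: power2_eq_square algebra_simps)
  finally have "((1 - z0) / 2)^2 \<le> (a - s) * (a + s)" .
  moreover have "0 < a + s" "a + s \<le> 2" using \<open>0 < a\<close> \<open>a \<le> 1\<close> \<open>0 \<le> s\<close> \<open>s \<le> 1\<close> by auto
  ultimately have "0 \<le> a - s" by (metis order_trans zero_le_power2 zero_le_mult_iff not_less)
  with \<open>a + s \<le> 2\<close> have "(a - s) * (a + s) \<le> (a - s) * 2" by (rule mult_left_mono)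
  with \<open>((1 - z0) / 2)^2 \<le> (a - s) * (a + s)\<close> show ?thesis unfolding a_def s_def by (simp add: power_divide)
qed

lemma integral_reciprocal_denominator_le:
  fixes A B z0 :: real
  assumes "0 \<le> A" and "0 \<le> B" and "A + B < 1" and "0 \<le> A^2 + 2 * B - B^2"
    and "z0 = (A * (1 - B) + sqrt (A^2 + 2 * B - B^2)) / (A^2 + 1)" and "z0 < 1"
  shows "integral {1/2 + z0/2 .. 1} (\<lambda>z. 1 / (1 - sqrt (1 - z^2) - A * z - B)) \<le> 4 / (1 - z0)"
proof -
  define K where "K = (1 - z0)^2 / 8"
  have "0 < K" unfolding K_def using \<open>z0 < 1\<close> by simp
  have K_le: "K \<le> 1 - sqrt (1 - z^2) - A * z - B" if "z \<in> {1/2 + z0/2 .. 1}" for z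
    unfolding K_def using integrand_denominator_ge[OF assms that] .
  then have pos: "0 < 1 - sqrt (1 - z^2) - A * z - B" if "z \<in> {1/2 + z0/2 .. 1}" for z
    using \<open>0 < K\<close> that by force
  have "continuous_on {1/2 + z0/2 .. 1} (\<lambda>z. 1 / (1 - sqrt (1 - z^2) - A * z - B))"
    using pos by (intro continuous_intros) force
  then have "integral {1/2 + z0/2 .. 1} (\<lambda>z. 1 / (1 - sqrt (1 - z^2) - A * z - B))
      \<le> integral {1/2 + z0/2 .. 1} (\<lambda>z. 1 / K)"
    using K_le pos \<open>0 < K\<close>
    by (intro integral_le integrable_continuous_real continuous_on_const divide_left_mono) auto
  also have "\<dots> = (1 - z0) / 2 * (1 / K)"
    using \<open>z0 < 1\<close> by (simp add: field_simps)
  also have "\<dots> = 4 / (1 - z0)"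
    using \<open>z0 < 1\<close> unfolding K_def by (simp add: power2_eq_square divide_simps)
  finally show ?thesis .
qed

lemma tendsto_const_divide_at_top:
  fixes E :: "'a \<Rightarrow> real"
  assumes "filterlim E at_top F"
  shows "((\<lambda>x. a / (E x + y)) \<longlongrightarrow> 0) F"
proof -
  have "filterlim (\<lambda>x. y + E x) at_top F"
    by (rule filterlim_tendsto_add_at_top[OF tendsto_const assms])
  then show ?thesis
    by (intro tendsto_divide_0[OF tendsto_const] filterlim_at_top_imp_at_infinity)
       (simp add: add.commute)
qed

lemma tendsto_larger_root:
  fixes A B :: "'a \<Rightarrow> real"
  assumes "(A \<longlongrightarrow> a) F" and "(B \<longlongrightarrow> 0) F" and "0 \<le> a"
  shows "((\<lambda>x. (A x * (1 - B x) + sqrt ((A x)^2 + 2 * B x - (B x)^2)) / ((A x)^2 + 1))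
           \<longlongrightarrow> 2 * a / (a^2 + 1)) F"
proof -
  have "0 < a^2 + 1" by (intro add_nonneg_pos) auto
  then have "((\<lambda>x. (A x * (1 - B x) + sqrt ((A x)^2 + 2 * B x - (B x)^2)) / ((A x)^2 + 1))
           \<longlongrightarrow> (a * (1 - 0) + sqrt (a^2 + 2 * 0 - 0^2)) / (a^2 + 1)) F"
    using assms(1,2) by (intro tendsto_intros) auto
  then show ?thesis using assms(3) by simp
qed

lemma eventually_coefficient_bounds:
  fixes E :: "'a \<Rightarrow> real" and b k c R zeta :: real
  assumes E: "filterlim E at_top F" and "0 \<le> b" and "0 \<le> k" and "0 < c" and "c < 1"
    and "0 \<le> R" and zeta: "2 * c / (c^2 + 1) < zeta"
  shows "\<forall>\<^sub>F x in F.
    let A = c * (1 + 3 * b * R^3 / (E x + b * R^3));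
        B = k * R^3 / (E x + b * R^3)
    in 0 \<le> A \<and> 0 \<le> B \<and> 0 < A^2 + 2 * B - B^2 \<and> A + B < 1 \<and>
       (A * (1 - B) + sqrt (A^2 + 2 * B - B^2)) / (A^2 + 1) < zeta"
proof -
  define A where "A x = c * (1 + 3 * b * R^3 / (E x + b * R^3))" for x
  define B where "B x = k * R^3 / (E x + b * R^3)" for x
  have "(A \<longlongrightarrow> c * (1 + 0)) F"
    unfolding A_def by (intro tendsto_intros tendsto_const_divide_at_top[OF E])
  then have A_lim: "(A \<longlongrightarrow> c) F" by simp
  have B_lim: "(B \<longlongrightarrow> 0) F"
    unfolding B_def by (rule tendsto_const_divide_at_top[OF E])
  have "\<forall>\<^sub>F x in F. - (b * R^3) < E x"
    using E unfolding filterlim_at_top_dense by blast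
  then have "\<forall>\<^sub>F x in F. 0 \<le> A x \<and> 0 \<le> B x"
  proof eventually_elim
    case (elim x)
    then have "0 < E x + b * R^3" by simp
    then show ?case
      unfolding A_def B_def using assms
      by (auto intro!: mult_nonneg_nonneg divide_nonneg_pos add_nonneg_nonneg)
  qed
  moreover have "\<forall>\<^sub>F x in F. 0 < (A x)^2 + 2 * B x - (B x)^2"
    using \<open>0 < c\<close> by (intro order_tendstoD(1)[of _ "c^2 + 2 * 0 - 0^2"] tendsto_intros A_lim B_lim) simp
  moreover have "\<forall>\<^sub>F x in F. A x + B x < 1"
    using \<open>c < 1\<close> by (intro order_tendstoD(2)[of _ "c + 0"] tendsto_intros A_lim B_lim) simp
  moreover have "\<forall>\<^sub>F x in F.
      (A x * (1 - B x) + sqrt ((A x)^2 + 2 * B x - (B x)^2)) / ((A x)^2 + 1) < zeta"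
    using \<open>0 < c\<close> by (intro order_tendstoD(2)[OF tendsto_larger_root[OF A_lim B_lim] zeta]) simp
  ultimately show ?thesis unfolding Let_def A_def B_def by eventually_elim blast
qed

lemma eventually_blowup_conditions_at:
  fixes E Q :: "real \<Rightarrow> real" and b k c R0 Rbar zeta theta :: real
  assumes "0 \<le> b" and "0 \<le> k" and "0 < c" and "c < 1" and "0 \<le> Rbar"
    and E: "filterlim E at_top at_top"
    and zeta: "2 * c / (c^2 + 1) < zeta" "zeta < 1"
    and Rbar: "4 / (1 - zeta) < ln (Rbar / R0)"
    and theta: "(c + 1)^2 / (2 * (c^2 + 1)) < theta"
    and Q: "\<forall>\<^sub>F sigma in at_top. theta < Q sigma / (R0 * (E sigma + b * R0^3))"
  shows "\<forall>\<^sub>F sigma in at_top. sigma > 0 \<and>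
    (let A = c * (1 + 3 * b * Rbar^3 / (E sigma + b * Rbar^3));
         B = k * Rbar^3 / (E sigma + b * Rbar^3);
         z0 = (A * (1 - B) + sqrt (A^2 + 2 * B - B^2)) / (A^2 + 1)
     in A^2 + 2 * B - B^2 > 0 \<and> A + B < 1 \<and> z0 < 1 \<and>
        integral {1/2 + z0/2 .. 1} (\<lambda>z. 1 / (1 - sqrt (1 - z^2) - A * z - B)) < ln (Rbar / R0) \<and>
        Q sigma / (R0 * (E sigma + b * R0^3)) > z0 / 2 + 1/2)"
proof -
  \<comment> \<open>The threshold of the hypothesis is the image of the limit of z0 under z \<mapsto> z/2 + 1/2.\<close>
  have "0 < c^2 + 1" by (intro add_nonneg_pos) auto
  then have "2 * c / (c^2 + 1) = 2 * ((c + 1)^2 / (2 * (c^2 + 1))) - 1"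
    by (simp add: field_simps power2_eq_square)
  then have theta': "2 * c / (c^2 + 1) < 2 * theta - 1" using theta by linarith
  note coefficients = eventually_coefficient_bounds[where R = Rbar,
      OF E \<open>0 \<le> b\<close> \<open>0 \<le> k\<close> \<open>0 < c\<close> \<open>c < 1\<close> \<open>0 \<le> Rbar\<close>]
  from coefficients[OF zeta(1)] coefficients[OF theta'] Q eventually_gt_at_top[of 0]
  show ?thesis
  proof eventually_elim
    case (elim sigma)
    define A where "A = c * (1 + 3 * b * Rbar^3 / (E sigma + b * Rbar^3))"
    define B where "B = k * Rbar^3 / (E sigma + b * Rbar^3)"
    define z0 where "z0 = (A * (1 - B) + sqrt (A^2 + 2 * B - B^2)) / (A^2 + 1)"
    note defs = A_def[symmetric] B_def[symmetric] z0_def[symmetric]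
    from elim have "0 \<le> A" "0 \<le> B" "0 < A^2 + 2 * B - B^2" "A + B < 1"
      and "z0 < zeta" "z0 < 2 * theta - 1" "theta < Q sigma / (R0 * (E sigma + b * R0^3))"
      and "0 < sigma"
      unfolding Let_def defs by auto
    have "integral {1/2 + z0/2 .. 1} (\<lambda>z. 1 / (1 - sqrt (1 - z^2) - A * z - B)) \<le> 4 / (1 - z0)"
      using \<open>z0 < zeta\<close> zeta(2)
      by (intro integral_reciprocal_denominator_le) (use \<open>0 \<le> A\<close> \<open>0 \<le> B\<close> \<open>A + B < 1\<close>
          \<open>0 < A^2 + 2 * B - B^2\<close> z0_def in auto)
    also have "\<dots> \<le> 4 / (1 - zeta)"
      using \<open>z0 < zeta\<close> zeta(2) by (intro divide_left_mono) auto
    finally have "integral {1/2 + z0/2 .. 1} (\<lambda>z. 1 / (1 - sqrt (1 - z^2) - A * z - B))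
        < ln (Rbar / R0)" using Rbar by linarith
    moreover have "z0 / 2 + 1/2 < Q sigma / (R0 * (E sigma + b * R0^3))"
      using \<open>z0 < 2 * theta - 1\<close> \<open>theta < Q sigma / (R0 * (E sigma + b * R0^3))\<close> by linarith
    ultimately show ?case
      unfolding Let_def defs
      using \<open>0 < sigma\<close> \<open>0 < A^2 + 2 * B - B^2\<close> \<open>A + B < 1\<close> \<open>z0 < zeta\<close> zeta(2) by simp
  qed
qed

lemma eventually_blowup_conditions:
  fixes E Q :: "real \<Rightarrow> real" and b k c R0 theta :: real
  assumes "0 \<le> b" and "0 \<le> k" and "0 < c" and "c < 1" and "0 < R0"
    and E: "filterlim E at_top at_top"
    and theta: "(c + 1)^2 / (2 * (c^2 + 1)) < theta"
    and Q: "\<forall>\<^sub>F sigma in at_top. theta < Q sigma / (R0 * (E sigma + b * R0^3))"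
  shows "\<exists>Rbar > R0. \<forall>\<^sub>F sigma in at_top. sigma > 0 \<and>
    (let A = c * (1 + 3 * b * Rbar^3 / (E sigma + b * Rbar^3));
         B = k * Rbar^3 / (E sigma + b * Rbar^3);
         z0 = (A * (1 - B) + sqrt (A^2 + 2 * B - B^2)) / (A^2 + 1)
     in A^2 + 2 * B - B^2 > 0 \<and> A + B < 1 \<and> z0 < 1 \<and>
        integral {1/2 + z0/2 .. 1} (\<lambda>z. 1 / (1 - sqrt (1 - z^2) - A * z - B)) < ln (Rbar / R0) \<and>
        Q sigma / (R0 * (E sigma + b * R0^3)) > z0 / 2 + 1/2)"
proof -
  have "2 * c < c^2 + 1" using two_mult_lt_square_add_one \<open>c < 1\<close> by simp
  then have "2 * c / (c^2 + 1) < 1" by (simp add: add_nonneg_pos)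
  then obtain zeta where zeta: "2 * c / (c^2 + 1) < zeta" "zeta < 1" using dense by blast
  define Rbar where "Rbar = R0 * exp (4 / (1 - zeta) + 1)"
  have "0 < 4 / (1 - zeta) + 1" using zeta by (simp add: add_pos_pos)
  then have "R0 < Rbar" unfolding Rbar_def using \<open>0 < R0\<close> by simp
  moreover have "4 / (1 - zeta) < ln (Rbar / R0)" unfolding Rbar_def using \<open>0 < R0\<close> by simp
  ultimately show ?thesis
    using eventually_blowup_conditions_at[OF assms(1-4) _ E zeta _ theta Q] \<open>0 < R0\<close> by auto
qed

lemma filterlim_square_mult_add_at_top:
  fixes e C :: real
  assumes "0 < e"
  shows "filterlim (\<lambda>s. s^2 * e + C) at_top at_top"
proof -
  have "filterlim (\<lambda>s::real. e * s^2) at_top at_top"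
    by (intro filterlim_tendsto_pos_mult_at_top[OF tendsto_const assms]
        filterlim_pow_at_top filterlim_ident) simp
  then have "filterlim (\<lambda>s::real. C + e * s^2) at_top at_top"
    by (rule filterlim_tendsto_add_at_top[OF tendsto_const])
  then show ?thesis by (simp add: add.commute mult.commute)
qed

lemma eventually_quadratic_ratio_gt:
  fixes a j e C R theta :: real
  assumes "0 < e" and "0 < R" and "theta < a / (R * e)"
  shows "\<forall>\<^sub>F s in at_top. 0 < s \<and> 0 < s^2 * e + C \<and> theta < (s^2 * a - s * j) / (R * (s^2 * e + C))"
proof -
  have "((\<lambda>s. (a - j * inverse s) / (R * (e + C * (inverse s)^2)))
      \<longlongrightarrow> (a - j * 0) / (R * (e + C * 0^2))) at_top"
    using assms(1,2) by (intro tendsto_intros tendsto_inverse_0_at_top filterlim_ident) auto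
  then have "\<forall>\<^sub>F s in at_top. theta < (a - j * inverse s) / (R * (e + C * (inverse s)^2))"
    using assms(3) by (intro order_tendstoD(1)) auto
  moreover have "\<forall>\<^sub>F s in at_top. 0 < s^2 * e + C"
    using filterlim_square_mult_add_at_top[OF assms(1)] unfolding filterlim_at_top_dense by blast
  moreover have "\<forall>\<^sub>F s in at_top. 0 < (s::real)" by (rule eventually_gt_at_top)
  ultimately show ?thesis
  proof eventually_elim
    case (elim s)
    have "a - j * inverse s = (s^2 * a - s * j) / s^2"
      using elim by (simp add: power2_eq_square field_simps)
    moreover have "R * (e + C * (inverse s)^2) = R * (s^2 * e + C) / s^2"
      using elim by (simp add: power2_eq_square field_simps)
    ultimately show ?case using elim by simp
  qed
qed

locale bounded_weighted_field =
  fixes S :: "'a::euclidean_space set" and u :: "'a \<Rightarrow> 'a" and w :: "'a \<Rightarrow> real"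
  assumes measurable_domain: "S \<in> sets lebesgue" and bounded_domain: "bounded S"
    and continuous_field: "continuous_on (closure S) u"
    and integrable_weight: "w integrable_on S"
    and weight_nonneg: "\<And>x. x \<in> S \<Longrightarrow> 0 \<le> w x"
begin

lemma integrable_continuous_mult_weight:
  assumes "continuous_on (closure S) g"
  shows "(\<lambda>x. g x * w x) integrable_on S"
proof -
  have "w absolutely_integrable_on S"
    using integrable_weight weight_nonneg by (rule nonnegative_absolutely_integrable_1)
  moreover have "g \<in> borel_measurable (lebesgue_on S)"
    using continuous_on_subset[OF assms closure_subset] measurable_domain
    by (rule continuous_imp_measurable_on_sets_lebesgue)
  moreover have "bounded (g ` S)"
    using compact_continuous_image[OF assms] bounded_domain
    by (meson bounded_subset closure_subset compact_closure compact_imp_bounded image_mono)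
  ultimately have "(\<lambda>x. g x * w x) absolutely_integrable_on S"
    using absolutely_integrable_bounded_measurable_product[OF bilinear_times _ measurable_domain]
    by blast
  then show ?thesis unfolding absolutely_integrable_on_def by blast
qed

lemma integral_energy_scaling:
  assumes "f integrable_on S"
  shows "integral S (\<lambda>x. w x * (norm (s *\<^sub>R u x))^2 + f x)
       = s^2 * integral S (\<lambda>x. (norm (u x))^2 * w x) + integral S f"
proof -
  have "(\<lambda>x. (norm (u x))^2 * w x) integrable_on S"
    by (intro integrable_continuous_mult_weight continuous_intros continuous_field)
  then have "integral S (\<lambda>x. s^2 * ((norm (u x))^2 * w x) + f x)
      = s^2 * integral S (\<lambda>x. (norm (u x))^2 * w x) + integral S f"
    using integral_add[OF integrable_on_mult_right assms] by simp
  then show ?thesis by (simp add: power_mult_distrib mult_ac)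
qed

lemma integral_flux_scaling_ge:
  assumes "0 \<le> s"
  shows "s^2 * integral S (\<lambda>x. inner x (u x) * norm (u x) * w x)
           - s * integral S (\<lambda>x. \<bar>inner x (u x)\<bar> * w x)
       \<le> integral S (\<lambda>x. inner x (s *\<^sub>R u x) * sqrt (1 + (norm (s *\<^sub>R u x))^2) * w x)"
proof -
  have flux: "(\<lambda>x. inner x (u x) * norm (u x) * w x) integrable_on S"
    and abs_flux: "(\<lambda>x. \<bar>inner x (u x)\<bar> * w x) integrable_on S"
    and scaled: "(\<lambda>x. inner x (s *\<^sub>R u x) * sqrt (1 + (norm (s *\<^sub>R u x))^2) * w x) integrable_on S"
    by (intro integrable_continuous_mult_weight continuous_intros continuous_field)+
  have "integral S (\<lambda>x. s^2 * (inner x (u x) * norm (u x) * w x) - s * (\<bar>inner x (u x)\<bar> * w x))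
      \<le> integral S (\<lambda>x. inner x (s *\<^sub>R u x) * sqrt (1 + (norm (s *\<^sub>R u x))^2) * w x)"
  proof (intro integral_le integrable_diff integrable_on_mult_right flux abs_flux scaled)
    fix x assume "x \<in> S"
    have "(s^2 * (inner x (u x) * norm (u x)) - s * \<bar>inner x (u x)\<bar>) * w x
        \<le> (s * inner x (u x) * sqrt (1 + (s * norm (u x))^2)) * w x"
      using mult_sqrt_one_plus_square_ge[OF assms norm_ge_zero] weight_nonneg[OF \<open>x \<in> S\<close>]
      by (rule mult_right_mono)
    then show "s^2 * (inner x (u x) * norm (u x) * w x) - s * (\<bar>inner x (u x)\<bar> * w x)
        \<le> inner x (s *\<^sub>R u x) * sqrt (1 + (norm (s *\<^sub>R u x))^2) * w x"
      using assms by (simp add: algebra_simps)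
  qed
  then show ?thesis
    using integral_diff[OF integrable_on_mult_right[OF flux] integrable_on_mult_right[OF abs_flux]]
    by simp
qed

lemma integral_flux_le_radius:
  assumes "S \<subseteq> cball 0 R"
  shows "integral S (\<lambda>x. inner x (u x) * norm (u x) * w x)
       \<le> R * integral S (\<lambda>x. (norm (u x))^2 * w x)"
proof -
  have "integral S (\<lambda>x. inner x (u x) * norm (u x) * w x)
      \<le> integral S (\<lambda>x. R * ((norm (u x))^2 * w x))"
  proof (intro integral_le integrable_on_mult_right integrable_continuous_mult_weight
      continuous_intros continuous_field)
    fix x assume "x \<in> S"
    have "norm x \<le> R" using assms \<open>x \<in> S\<close> by auto
    then have "inner x (u x) \<le> R * norm (u x)"
      using norm_cauchy_schwarz[of x "u x"]
      by (meson mult_right_mono norm_ge_zero order_trans)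
    then have "inner x (u x) * (norm (u x) * w x) \<le> R * norm (u x) * (norm (u x) * w x)"
      using weight_nonneg[OF \<open>x \<in> S\<close>] by (intro mult_right_mono) auto
    then show "inner x (u x) * norm (u x) * w x \<le> R * ((norm (u x))^2 * w x)"
      by (simp add: power2_eq_square mult_ac)
  qed
  then show ?thesis by simp
qed

lemma eventually_flux_energy_ratio_gt:
  fixes R alpha beta :: real
  assumes radius: "S \<subseteq> cball 0 R" and "0 < R" and f: "f integrable_on S"
    and "alpha < 1"
    and flux_gt: "R * alpha * integral S (\<lambda>x. (norm (u x))^2 * w x)
                    < integral S (\<lambda>x. inner x (u x) * norm (u x) * w x)"
  obtains theta where "alpha < theta"
    and "filterlim (\<lambda>s. integral S (\<lambda>x. w x * (norm (s *\<^sub>R u x))^2 + f x)) at_top at_top"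
    and "\<forall>\<^sub>F s in at_top. theta <
           integral S (\<lambda>x. inner x (s *\<^sub>R u x) * sqrt (1 + (norm (s *\<^sub>R u x))^2) * w x)
           / (R * (integral S (\<lambda>x. w x * (norm (s *\<^sub>R u x))^2 + f x) + beta))"
proof -
  define I2 where "I2 = integral S (\<lambda>x. (norm (u x))^2 * w x)"
  define I3 where "I3 = integral S (\<lambda>x. inner x (u x) * norm (u x) * w x)"
  define J where "J = integral S (\<lambda>x. \<bar>inner x (u x)\<bar> * w x)"
  have energy: "integral S (\<lambda>x. w x * (norm (s *\<^sub>R u x))^2 + f x) = s^2 * I2 + integral S f"
    for s unfolding I2_def using f by (rule integral_energy_scaling)
  have "I3 \<le> R * I2" unfolding I3_def I2_def using radius by (rule integral_flux_le_radius)
  with flux_gt \<open>alpha < 1\<close> have "0 < R * I2 * (1 - alpha)" unfolding I2_def I3_def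
    by (simp add: algebra_simps)
  then have "0 < I2" using \<open>0 < R\<close> \<open>alpha < 1\<close> by (simp add: zero_less_mult_iff)
  then have "alpha < I3 / (R * I2)"
    using flux_gt \<open>0 < R\<close> unfolding I2_def I3_def by (simp add: pos_less_divide_eq mult_ac)
  then obtain theta where "alpha < theta" and theta: "theta < I3 / (R * I2)"
    using dense by blast
  show thesis
  proof (rule that[OF \<open>alpha < theta\<close>])
    show "filterlim (\<lambda>s. integral S (\<lambda>x. w x * (norm (s *\<^sub>R u x))^2 + f x)) at_top at_top"
      unfolding energy by (rule filterlim_square_mult_add_at_top[OF \<open>0 < I2\<close>])
    from eventually_quadratic_ratio_gt[OF \<open>0 < I2\<close> \<open>0 < R\<close> theta, where j = J and C = "integral S f + beta"]
    show "\<forall>\<^sub>F s in at_top. theta <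
           integral S (\<lambda>x. inner x (s *\<^sub>R u x) * sqrt (1 + (norm (s *\<^sub>R u x))^2) * w x)
           / (R * (integral S (\<lambda>x. w x * (norm (s *\<^sub>R u x))^2 + f x) + beta))"
    proof eventually_elim
      case (elim s)
      then have "theta < (s^2 * I3 - s * J) / (R * (s^2 * I2 + integral S f + beta))"
        by (simp add: add.assoc)
      also have "\<dots> \<le> integral S (\<lambda>x. inner x (s *\<^sub>R u x) * sqrt (1 + (norm (s *\<^sub>R u x))^2) * w x)
           / (R * (s^2 * I2 + integral S f + beta))"
        using elim integral_flux_scaling_ge[of s] \<open>0 < R\<close> unfolding I3_def J_def
        by (intro divide_right_mono) (auto simp: add.assoc)
      finally show ?case unfolding energy .
    qed
  qed
qed

end

theorem mainTheorem11:
  fixes p :: "real \<Rightarrow> real \<Rightarrow> real"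
    and rho0 n0 Pi0 :: "real^3 \<Rightarrow> real"
    and u1 :: "real^3 \<Rightarrow> real^3"
    and b k c R0 rhobar :: real
  assumes "b > 0" and "k > 0" and "0 < c" and "c < 1" and "R0 > 0" and "rhobar > 0"
    and pos: "\<forall>x. rho0 x + p (rho0 x) (n0 x) + Pi0 x > 0"
    and int_w: "(\<lambda>x. rho0 x + p (rho0 x) (n0 x) + Pi0 x) integrable_on ball 0 R0"
    and int_rho: "rho0 integrable_on ball 0 R0"
    and smooth: "smooth_field u1"
    and supp: "closure {x. u1 x \<noteq> 0} \<subseteq> ball 0 R0"
    and ineq: "integral (ball 0 R0)
                 (\<lambda>x. inner x (u1 x) * norm (u1 x) * (rho0 x + p (rho0 x) (n0 x) + Pi0 x))
               > R0 * (c + 1)^2 / (2 * (c^2 + 1)) *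
                 integral (ball 0 R0)
                 (\<lambda>x. (norm (u1 x))^2 * (rho0 x + p (rho0 x) (n0 x) + Pi0 x))"
  shows "\<exists>Rbar > R0. \<forall>\<^sub>F sigma in at_top. sigma > 0 \<and>
    (let E = integral (ball 0 R0)
               (\<lambda>x. (rho0 x + p (rho0 x) (n0 x) + Pi0 x) * (norm (sigma *\<^sub>R u1 x))^2
                    + rho0 x - rhobar);
         Q0 = integral (ball 0 R0)
               (\<lambda>x. inner x (sigma *\<^sub>R u1 x) * sqrt (1 + (norm (sigma *\<^sub>R u1 x))^2)
                    * (rho0 x + p (rho0 x) (n0 x) + Pi0 x));
         A = c * (1 + 3 * b * Rbar^3 / (E + b * Rbar^3));
         B = k * Rbar^3 / (E + b * Rbar^3);
         z0 = (A * (1 - B) + sqrt (A^2 + 2 * B - B^2)) / (A^2 + 1)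
     in A^2 + 2 * B - B^2 > 0 \<and> A + B < 1 \<and> z0 < 1 \<and>
        integral {1/2 + z0/2 .. 1} (\<lambda>z. 1 / (1 - sqrt (1 - z^2) - A * z - B)) < ln (Rbar / R0) \<and>
        Q0 / (R0 * (E + b * R0^3)) > z0 / 2 + 1/2)"
proof -
  \<comment> \<open>Smoothness of u1 is only used through continuity.\<close>
  have "continuous_on UNIV u1"
    using smooth unfolding smooth_field_def by (metis Ck_field.simps(1))
  interpret bounded_weighted_field "ball 0 R0" u1 "\<lambda>x. rho0 x + p (rho0 x) (n0 x) + Pi0 x"
  proof
    show "continuous_on (closure (ball 0 R0)) u1"
      using \<open>continuous_on UNIV u1\<close> continuous_on_subset by blast
    show "0 \<le> rho0 x + p (rho0 x) (n0 x) + Pi0 x" for x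
      using pos less_imp_le by blast
  qed (simp_all add: int_w)
  have "ball 0 R0 \<subseteq> cball 0 R0" by (rule ball_subset_cball)
  moreover note \<open>R0 > 0\<close>
  moreover have "(\<lambda>x. rho0 x - rhobar) integrable_on ball 0 R0"
    by (intro integrable_diff int_rho integrable_on_const lmeasurable_ball)
  moreover have "(c + 1)^2 / (2 * (c^2 + 1)) < 1"
    using \<open>c < 1\<close> by (intro square_sum_div_lt_1) simp
  moreover note ineq[folded times_divide_eq_right]
  \<comment> \<open>add_diff_eq rewrites the locale's energy integrand w |u1|^2 + (rho0 - rhobar) into
    the shape used in the statement.\<close>
  ultimately show ?thesis
    by (rule eventually_flux_energy_ratio_gt[where beta = "b * R0^3"])
      (unfold Let_def add_diff_eq, rule eventually_blowup_conditions[unfolded Let_def,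
        OF less_imp_le[OF \<open>b > 0\<close>] less_imp_le[OF \<open>k > 0\<close>] \<open>0 < c\<close> \<open>c < 1\<close> \<open>R0 > 0\<close>])
qed

end
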